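(* Let $n\ge3$ and let $\mathcal{P}=(V_0,\dots,V_{n-1})$ be an $n$-gon. The following are equivalent: (I) $\mathcal{P}$ is ordinary and locally-strictly convex; (II) $\mathcal{P}$ is quasi-strictly convex; (III) $\mathcal{P}$ is strictly convex.
   Context: A polygon is a finite sequence $\mathcal{P}=(V_0,\dots,V_{n-1})$ of points of $\mathbb{R}^2$, with $V_n:=V_0$, $V_{-1}:=V_{n-1}$, and $i\oplus1:=i+1$ for $i\le n-2$, $(n-1)\oplus1:=0$. $\mathcal{P}$ is convex if $\bigcup_{i=0}^{n-1}\operatorname{conv}\{V_i,V_{i+1}\}=\partial\operatorname{conv}\{V_0,\dots,V_{n-1}\}$. $\mathcal{P}$ is ordinary if $V_i\ne V_j$ for all distinct $i,j\in\{0,\dots,n-1\}$; locally-strict if $V_{i-1},V_i,V_{i+1}$ are non-collinear for every $i\in\{0,\dots,n-1\}$; quasi-strict if for every $i\in\{0,\dots,n-1\}$ and every $j\in\{0,\dots,n-1\}\setminus\{i,i\oplus1\}$ the points $V_i,V_{i\oplus1},V_j$ are non-collinear; strict if $V_i,V_j,V_k$ are non-collinear for any three distinct indices. "Locally-strictly convex", "quasi-strictly convex", "strictly convex" mean the respective property together with convexity. *)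

theory Defs
  imports "HOL-Analysis.Analysis"
begin

text \<open>An n-gon is represented by n and a map V :: nat => real^2; only V 0, ..., V (n-1) matter.
  Index arithmetic is cyclic: the successor of i is (i+1) mod n, the predecessor is (i+n-1) mod n.\<close>

definition succ_idx :: "nat \<Rightarrow> nat \<Rightarrow> nat" where
  "succ_idx n i = (i + 1) mod n"

definition pred_idx :: "nat \<Rightarrow> nat \<Rightarrow> nat" where
  "pred_idx n i = (i + n - 1) mod n"

definition polygon_convex :: "nat \<Rightarrow> (nat \<Rightarrow> real^2) \<Rightarrow> bool" where
  "polygon_convex n V \<longleftrightarrow>
     (\<Union>i<n. closed_segment (V i) (V (succ_idx n i))) = frontier (convex hull (V ` {..<n}))"

definition polygon_ordinary :: "nat \<Rightarrow> (nat \<Rightarrow> real^2) \<Rightarrow> bool" where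
  "polygon_ordinary n V \<longleftrightarrow> (\<forall>i<n. \<forall>j<n. i \<noteq> j \<longrightarrow> V i \<noteq> V j)"

definition polygon_locally_strict :: "nat \<Rightarrow> (nat \<Rightarrow> real^2) \<Rightarrow> bool" where
  "polygon_locally_strict n V \<longleftrightarrow>
     (\<forall>i<n. \<not> collinear {V (pred_idx n i), V i, V (succ_idx n i)})"

definition polygon_quasi_strict :: "nat \<Rightarrow> (nat \<Rightarrow> real^2) \<Rightarrow> bool" where
  "polygon_quasi_strict n V \<longleftrightarrow>
     (\<forall>i<n. \<forall>j<n. j \<noteq> i \<and> j \<noteq> succ_idx n i \<longrightarrow>
        \<not> collinear {V i, V (succ_idx n i), V j})"

definition polygon_strict :: "nat \<Rightarrow> (nat \<Rightarrow> real^2) \<Rightarrow> bool" where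
  "polygon_strict n V \<longleftrightarrow>
     (\<forall>i<n. \<forall>j<n. \<forall>k<n. i \<noteq> j \<and> j \<noteq> k \<and> i \<noteq> k \<longrightarrow> \<not> collinear {V i, V j, V k})"

end

theory Submission
  imports Defs
begin

text \<open>Only (I) \<Longrightarrow> (III) has content. If three vertices were collinear, one of them, \<open>V j\<close>,
  would lie strictly inside the chord between the other two. Each edge at \<open>V j\<close> lies on the
  frontier of the hull, and a supporting line at the midpoint of that edge contains the edge; as it
  also contains the interior point \<open>V j\<close> of the chord, it contains the whole chord. So both
  neighbours of \<open>V j\<close> lie on the line of the chord, against local strictness.\<close>

lemma supporting_hyperplane_frontier:
  fixes S :: "'a::euclidean_space set"
  assumes "convex S" "x \<in> frontier S"
  obtains a where "a \<noteq> 0" "\<And>y. y \<in> S \<Longrightarrow> a \<bullet> x \<le> a \<bullet> y"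
proof (cases "interior S = {}")
  case True
  then obtain a b where ab: "a \<noteq> 0" "S \<subseteq> {x. a \<bullet> x = b}"
    using empty_interior_subset_hyperplane assms(1) by metis
  then have "closure S \<subseteq> {x. a \<bullet> x = b}"
    using closed_hyperplane closure_minimal by blast
  then have "a \<bullet> x = b"
    using assms(2) frontier_def by auto
  then show ?thesis
    using that[of a] ab by force
next
  case False
  have "x \<in> closure S" "x \<notin> rel_interior S"
    using assms(2) False rel_interior_nonempty_interior frontier_def by auto
  then obtain a where "a \<noteq> 0" "\<And>y. y \<in> closure S \<Longrightarrow> a \<bullet> x \<le> a \<bullet> y"
    using supporting_hyperplane_relative_frontier assms(1) by metis
  then show ?thesis
    using that closure_subset by blast
qed

lemma inner_open_segment_min:
  fixes a :: "'a::real_inner"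
  assumes "u \<in> open_segment p q" "a \<bullet> u \<le> a \<bullet> p" "a \<bullet> u \<le> a \<bullet> q"
  shows "a \<bullet> p = a \<bullet> u" "a \<bullet> q = a \<bullet> u"
proof -
  obtain t where t: "0 < t" "t < 1" "u = (1 - t) *\<^sub>R p + t *\<^sub>R q"
    using assms(1) by (auto simp: in_segment)
  then have "a \<bullet> u = (1 - t) * (a \<bullet> p) + t * (a \<bullet> q)"
    by (simp add: inner_add_right)
  then have sum: "(1 - t) * (a \<bullet> p - a \<bullet> u) + t * (a \<bullet> q - a \<bullet> u) = 0"
    by (simp add: algebra_simps)
  have nonneg: "(1 - t) * (a \<bullet> p - a \<bullet> u) \<ge> 0" "t * (a \<bullet> q - a \<bullet> u) \<ge> 0"
    using t(1,2) assms(2,3) by simp_all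
  from sum nonneg have "(1 - t) * (a \<bullet> p - a \<bullet> u) = 0"
    by linarith
  with t(2) show "a \<bullet> p = a \<bullet> u"
    by simp
  from sum nonneg have "t * (a \<bullet> q - a \<bullet> u) = 0"
    by linarith
  with t(1) show "a \<bullet> q = a \<bullet> u"
    by simp
qed

lemma inner_midpoint_min:
  fixes a :: "'a::real_inner"
  assumes "a \<bullet> midpoint u w \<le> a \<bullet> u" "a \<bullet> midpoint u w \<le> a \<bullet> w"
  shows "a \<bullet> u = a \<bullet> midpoint u w" "a \<bullet> w = a \<bullet> midpoint u w"
proof -
  have "a \<bullet> midpoint u w = (a \<bullet> u + a \<bullet> w) / 2"
    by (simp add: midpoint_def inner_add_right)
  with assms show "a \<bullet> u = a \<bullet> midpoint u w" and "a \<bullet> w = a \<bullet> midpoint u w"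
    by auto
qed

lemma collinear_frontier_segment_chord:
  fixes S :: "(real^2) set"
  assumes "convex S" "closed_segment u w \<subseteq> frontier S" "u \<in> S" "w \<in> S" "p \<in> S" "q \<in> S"
    and "u \<in> open_segment p q"
  shows "collinear {p, q, w}"
proof -
  have "midpoint u w \<in> frontier S"
    using assms(2) midpoint_in_closed_segment by blast
  then obtain a where "a \<noteq> 0" and a: "\<And>y. y \<in> S \<Longrightarrow> a \<bullet> midpoint u w \<le> a \<bullet> y"
    using supporting_hyperplane_frontier[OF assms(1)] by metis
  note uw = inner_midpoint_min[OF a[OF assms(3)] a[OF assms(4)]]
  have "a \<bullet> u \<le> a \<bullet> p" "a \<bullet> u \<le> a \<bullet> q"
    using a assms(5,6) uw by simp_all
  note pq = inner_open_segment_min[OF assms(7) this]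
  have "{p, q, w} \<subseteq> {x. a \<bullet> x = a \<bullet> u}"
    using uw pq by auto
  moreover have "collinear {x. a \<bullet> x = a \<bullet> u}"
    using \<open>a \<noteq> 0\<close> by (simp add: collinear_aff_dim)
  ultimately show ?thesis
    using collinear_subset by blast
qed

lemma succ_idx_less: "0 < n \<Longrightarrow> succ_idx n i < n"
  unfolding succ_idx_def by simp

lemma pred_idx_less: "0 < n \<Longrightarrow> pred_idx n i < n"
  unfolding pred_idx_def by simp

lemma succ_idx_eq: "i < n \<Longrightarrow> succ_idx n i = (if i = n - 1 then 0 else i + 1)"
  unfolding succ_idx_def by (auto simp: mod_if)

lemma pred_idx_eq: "i < n \<Longrightarrow> pred_idx n i = (if i = 0 then n - 1 else i - 1)"
  unfolding pred_idx_def by (auto simp: mod_if)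

lemma succ_pred_idx: "i < n \<Longrightarrow> succ_idx n (pred_idx n i) = i"
  by (simp add: succ_idx_eq pred_idx_eq; arith)

lemma pred_succ_idx: "i < n \<Longrightarrow> pred_idx n (succ_idx n i) = i"
  by (simp add: succ_idx_eq pred_idx_eq)

lemma succ_idx_neq: "2 \<le> n \<Longrightarrow> i < n \<Longrightarrow> succ_idx n i \<noteq> i"
  by (simp add: succ_idx_eq)

lemma pred_idx_neq_succ_idx: "3 \<le> n \<Longrightarrow> i < n \<Longrightarrow> pred_idx n i \<noteq> succ_idx n i"
  by (simp add: succ_idx_eq pred_idx_eq; arith)

lemma polygon_strict_imp_quasi_strict:
  assumes "n \<ge> 2" "polygon_strict n V"
  shows "polygon_quasi_strict n V"
  unfolding polygon_quasi_strict_def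
proof (intro allI impI)
  fix i j assume "i < n" "j < n" "j \<noteq> i \<and> j \<noteq> succ_idx n i"
  moreover from assms(1) \<open>i < n\<close> have "succ_idx n i < n" "succ_idx n i \<noteq> i"
    by (simp_all add: succ_idx_less succ_idx_neq)
  ultimately show "\<not> collinear {V i, V (succ_idx n i), V j}"
    using assms(2)[unfolded polygon_strict_def, rule_format, of i "succ_idx n i" j] by auto
qed

lemma polygon_quasi_strict_imp_ordinary:
  assumes "n \<ge> 3" "polygon_quasi_strict n V"
  shows "polygon_ordinary n V"
  unfolding polygon_ordinary_def
proof (intro allI impI notI)
  fix i j assume ij: "i < n" "j < n" "i \<noteq> j" and "V i = V j"
  have "j \<noteq> succ_idx n i \<or> i \<noteq> succ_idx n j"
    by (metis ij(1) pred_succ_idx pred_idx_neq_succ_idx[OF assms(1) ij(2)])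
  then show False
    using assms(2)[unfolded polygon_quasi_strict_def, rule_format, of i j]
      assms(2)[unfolded polygon_quasi_strict_def, rule_format, of j i] ij \<open>V i = V j\<close>
    by (auto simp: insert_commute)
qed

lemma polygon_quasi_strict_imp_locally_strict:
  assumes "n \<ge> 3" "polygon_quasi_strict n V"
  shows "polygon_locally_strict n V"
  unfolding polygon_locally_strict_def
proof (intro allI impI)
  fix i assume "i < n"
  with assms(1) have "pred_idx n i < n" "succ_idx n i < n" "succ_idx n i \<noteq> i"
    by (simp_all add: pred_idx_less succ_idx_less succ_idx_neq)
  moreover have "succ_idx n i \<noteq> pred_idx n i"
    using pred_idx_neq_succ_idx assms(1) \<open>i < n\<close> by metis
  ultimately show "\<not> collinear {V (pred_idx n i), V i, V (succ_idx n i)}"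
    using assms(2)[unfolded polygon_quasi_strict_def, rule_format,
        of "pred_idx n i" "succ_idx n i"]
    by (simp add: succ_pred_idx[OF \<open>i < n\<close>])
qed

lemma convex_polygon_vertex_not_in_open_segment:
  assumes "n \<ge> 3" "polygon_convex n V" "polygon_locally_strict n V"
    and "i < n" "j < n" "k < n" "V i \<noteq> V k"
  shows "V j \<notin> open_segment (V i) (V k)"
proof
  assume between: "V j \<in> open_segment (V i) (V k)"
  define S where "S = convex hull (V ` {..<n})"
  define p where "p = pred_idx n j"
  define s where "s = succ_idx n j"
  have "p < n" "s < n" "succ_idx n p = j"
    using assms(1,5) pred_idx_less succ_idx_less succ_pred_idx by (simp_all add: p_def s_def)
  have vertex: "V m \<in> S" if "m < n" for m
    unfolding S_def using that by (simp add: hull_inc)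
  have edge: "closed_segment (V m) (V (succ_idx n m)) \<subseteq> frontier S" if "m < n" for m
    using assms(2) that unfolding polygon_convex_def S_def by blast
  have "collinear {V i, V k, V s}"
    using collinear_frontier_segment_chord[of S "V j" "V s"] edge[of j] vertex between
      \<open>s < n\<close> assms(4-6) by (simp add: S_def s_def)
  moreover have "collinear {V i, V k, V p}"
    using collinear_frontier_segment_chord[of S "V j" "V p"] edge[of p] vertex between
      \<open>p < n\<close> \<open>succ_idx n p = j\<close> assms(4-6) by (simp add: S_def closed_segment_commute)
  moreover have "collinear {V i, V k, V j}"
    using between by (simp add: between_imp_collinear between_mem_segment open_closed_segment
      insert_commute)
  ultimately have "collinear (insert (V i) (insert (V k) {V p, V j, V s}))"
    by (intro iffD2[OF collinear_triples[OF assms(7)]]) blast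
  then have "collinear {V p, V j, V s}"
    by (rule collinear_subset) blast
  then show False
    using assms(3,5) unfolding polygon_locally_strict_def p_def s_def by blast
qed

lemma convex_polygon_ordinary_locally_strict_imp_strict:
  assumes "n \<ge> 3" "polygon_convex n V" "polygon_ordinary n V" "polygon_locally_strict n V"
  shows "polygon_strict n V"
  unfolding polygon_strict_def
proof (intro allI impI)
  fix i j k assume ijk: "i < n" "j < n" "k < n" "i \<noteq> j \<and> j \<noteq> k \<and> i \<noteq> k"
  have not_between: "\<not> between (V a, V b) (V c)"
    if "a < n" "b < n" "c < n" "a \<noteq> b" "b \<noteq> c" "a \<noteq> c" for a b c
  proof -
    have "V a \<noteq> V b" "V c \<noteq> V a" "V c \<noteq> V b"
      using that assms(3) unfolding polygon_ordinary_def by metis+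
    then have "between (V a, V b) (V c) \<longleftrightarrow> V c \<in> open_segment (V a) (V b)"
      by (simp add: between_mem_segment open_segment_def)
    then show ?thesis
      using convex_polygon_vertex_not_in_open_segment[OF assms(1,2,4) that(1,3,2) \<open>V a \<noteq> V b\<close>]
      by simp
  qed
  show "\<not> collinear {V i, V j, V k}"
    unfolding collinear_between_cases
    using not_between[of j k i] not_between[of k i j] not_between[of i j k] ijk by auto
qed

theorem proposition1p14:
  fixes n :: nat and V :: "nat \<Rightarrow> real^2"
  assumes "n \<ge> 3"
  shows "((polygon_ordinary n V \<and> polygon_locally_strict n V \<and> polygon_convex n V)
            \<longleftrightarrow> (polygon_quasi_strict n V \<and> polygon_convex n V))
       \<and> ((polygon_quasi_strict n V \<and> polygon_convex n V)
            \<longleftrightarrow> (polygon_strict n V \<and> polygon_convex n V))"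
proof -
  have "n \<ge> 2"
    using assms by simp
  show ?thesis
    using polygon_quasi_strict_imp_ordinary[OF assms]
      polygon_quasi_strict_imp_locally_strict[OF assms]
      polygon_strict_imp_quasi_strict[OF \<open>n \<ge> 2\<close>]
      convex_polygon_ordinary_locally_strict_imp_strict[OF assms]
    by blast
qed

end
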